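(* Let $G$ be a graph that violates the matching condition, i.e., there is a matching $M$ in $G$ such that the subgraph of $G$ induced by the vertices covered by $M$ has no independent set of size $|M|$. Let $uv$ be any edge of $G$, and let $G'$ be obtained from $G$ by deleting $uv$, adding two new vertices $x_1,x_2$, and adding the edges $ux_1,x_1x_2,x_2v$. Then $G'$ also violates the matching condition, i.e., there is a matching $M'$ in $G'$ such that the subgraph of $G'$ induced by the vertices covered by $M'$ has no independent set of size $|M'|$.
   Context: All graphs are finite and simple. A graph satisfies the matching condition if for every matching $M$ in it, the subgraph induced by the set of vertices covered by $M$ contains an independent set of size $|M|$. *)

theory Defs
  imports Main
begin

definition graph :: "'a set \<Rightarrow> 'a set set \<Rightarrow> bool" where
  "graph V E \<longleftrightarrow> finite V \<and> (\<forall>e\<in>E. \<exists>a b. e = {a, b} \<and> a \<noteq> b \<and> a \<in> V \<and> b \<in> V)"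

definition matching :: "'a set set \<Rightarrow> 'a set set \<Rightarrow> bool" where
  "matching E M \<longleftrightarrow> M \<subseteq> E \<and> (\<forall>e\<in>M. \<forall>f\<in>M. e \<noteq> f \<longrightarrow> e \<inter> f = {})"

text \<open>S is independent in G (equivalently in any induced subgraph containing S).\<close>
definition independent :: "'a set set \<Rightarrow> 'a set \<Rightarrow> bool" where
  "independent E S \<longleftrightarrow> (\<forall>a\<in>S. \<forall>b\<in>S. {a, b} \<notin> E)"

definition matching_condition :: "'a set \<Rightarrow> 'a set set \<Rightarrow> bool" where
  "matching_condition V E \<longleftrightarrow>
     (\<forall>M. matching E M \<longrightarrow> (\<exists>S. S \<subseteq> \<Union>M \<and> independent E S \<and> card S = card M))"

end

theory Submission
  imports Defs
begin

text \<open>A matching M of G witnessing the violation lifts to a matching M' of the subdivided graph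
with one more edge, covering in addition exactly x1 and x2: add x1x2 if uv is not in M, and
otherwise replace uv by ux1 and x2v. An independent set of size |M| + 1 in the vertices covered
by M' then contracts to one of size |M| in G: it contains at most one of x1, x2, which we drop;
if it contains both u and v it contains neither x1 nor x2, and we drop u instead.\<close>

lemma graph_edge_subset: "graph V E \<Longrightarrow> e \<in> E \<Longrightarrow> e \<subseteq> V"
  unfolding graph_def by fastforce

lemma graph_edge_neq: "graph V E \<Longrightarrow> {u, v} \<in> E \<Longrightarrow> u \<noteq> v"
  unfolding graph_def by (metis doubleton_eq_iff)

lemma graph_Union_subset: "graph V E \<Longrightarrow> M \<subseteq> E \<Longrightarrow> \<Union>M \<subseteq> V"
  using graph_edge_subset by blast

lemma graph_finite_Union: "graph V E \<Longrightarrow> M \<subseteq> E \<Longrightarrow> finite (\<Union>M)"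
  using graph_Union_subset finite_subset graph_def by metis

lemma graph_finite_matching: "graph V E \<Longrightarrow> M \<subseteq> E \<Longrightarrow> finite M"
  using graph_finite_Union finite_UnionD by blast

lemma matching_edges_mono: "matching E M \<Longrightarrow> M \<subseteq> E' \<Longrightarrow> matching E' M"
  unfolding matching_def by blast

lemma matching_Diff: "matching E M \<Longrightarrow> matching E (M - N)"
  unfolding matching_def by blast

lemma matching_insert:
  assumes "matching E M" "e \<in> E" "e \<inter> \<Union>M = {}"
  shows "matching E (insert e M)"
  using assms unfolding matching_def by blast

lemma matching_Union_Diff_disjoint:
  "matching E M \<Longrightarrow> e \<in> M \<Longrightarrow> e \<inter> \<Union>(M - {e}) = {}"
  unfolding matching_def by fastforce

lemma independent_mono: "independent E S \<Longrightarrow> T \<subseteq> S \<Longrightarrow> independent E T"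
  unfolding independent_def by blast

lemma independent_subset_card:
  assumes "independent E S" "n \<le> card S"
  obtains T where "T \<subseteq> S" "independent E T" "card T = n"
proof -
  obtain T where "T \<subseteq> S" "card T = n" using obtain_subset_with_card_n[OF assms(2)] .
  with independent_mono[OF assms(1)] show thesis using that by blast
qed

definition subdivide_edge :: "'a set set \<Rightarrow> 'a \<Rightarrow> 'a \<Rightarrow> 'a \<Rightarrow> 'a \<Rightarrow> 'a set set" where
  "subdivide_edge E u v x1 x2 = (E - {{u, v}}) \<union> {{u, x1}, {x1, x2}, {x2, v}}"

lemma matching_subdivide_edge_notin:
  assumes G: "graph V E" and M: "matching E M" and x: "x1 \<notin> V" "x2 \<notin> V"
    and uv_M: "{u, v} \<notin> M"
  shows "matching (subdivide_edge E u v x1 x2) (insert {x1, x2} M)"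
    and "card (insert {x1, x2} M) = card M + 1"
proof -
  have ME: "M \<subseteq> E" using M unfolding matching_def by simp
  have x_M: "{x1, x2} \<inter> \<Union>M = {}" using x graph_Union_subset[OF G ME] by auto
  have "matching (subdivide_edge E u v x1 x2) M"
    using ME uv_M unfolding subdivide_edge_def by (intro matching_edges_mono[OF M]) auto
  then show "matching (subdivide_edge E u v x1 x2) (insert {x1, x2} M)"
    by (rule matching_insert[OF _ _ x_M]) (simp add: subdivide_edge_def)
  have "{x1, x2} \<notin> M" using x_M by auto
  then show "card (insert {x1, x2} M) = card M + 1"
    using graph_finite_matching[OF G ME] by simp
qed

lemma matching_subdivide_edge_in:
  assumes G: "graph V E" and M: "matching E M" and x: "x1 \<notin> V" "x2 \<notin> V" "x1 \<noteq> x2"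
    and uv_M: "{u, v} \<in> M"
  defines "M' \<equiv> insert {u, x1} (insert {x2, v} (M - {{u, v}}))"
  shows "matching (subdivide_edge E u v x1 x2) M'" and "card M' = card M + 1"
proof -
  let ?M0 = "M - {{u, v}}"
  have ME: "M \<subseteq> E" using M unfolding matching_def by simp
  have uv_E: "{u, v} \<in> E" using uv_M ME by blast
  have "u \<in> V" "v \<in> V" "u \<noteq> v"
    using graph_edge_subset[OF G uv_E] graph_edge_neq[OF G uv_E] by auto
  moreover have "{u, v} \<inter> \<Union>?M0 = {}" using matching_Union_Diff_disjoint[OF M uv_M] .
  moreover have "\<Union>?M0 \<subseteq> V" using graph_Union_subset[OF G ME] by auto
  ultimately have disj: "{x2, v} \<inter> \<Union>?M0 = {}" "{u, x1} \<inter> \<Union>(insert {x2, v} ?M0) = {}"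
    using x by auto
  have "matching (subdivide_edge E u v x1 x2) ?M0"
    using ME unfolding subdivide_edge_def by (intro matching_edges_mono[OF matching_Diff[OF M]]) auto
  then have "matching (subdivide_edge E u v x1 x2) (insert {x2, v} ?M0)"
    by (rule matching_insert[OF _ _ disj(1)]) (simp add: subdivide_edge_def)
  then show "matching (subdivide_edge E u v x1 x2) M'"
    unfolding M'_def by (rule matching_insert[OF _ _ disj(2)]) (simp add: subdivide_edge_def)
  have "{x2, v} \<notin> ?M0" "{u, x1} \<notin> insert {x2, v} ?M0"
    using disj by auto
  moreover have "Suc (card ?M0) = card M"
    using card_Suc_Diff1[OF graph_finite_matching[OF G ME] uv_M] .
  ultimately show "card M' = card M + 1"
    unfolding M'_def using graph_finite_matching[OF G ME] by simp
qed

lemma matching_subdivide_edge: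
  assumes "graph V E" "matching E M" "x1 \<notin> V" "x2 \<notin> V" "x1 \<noteq> x2"
  obtains M' where "matching (subdivide_edge E u v x1 x2) M'"
    "\<Union>M' = \<Union>M \<union> {x1, x2}" "card M' = card M + 1"
proof (cases "{u, v} \<in> M")
  case False
  show thesis
    using that matching_subdivide_edge_notin[OF assms(1-4) False] by simp
next
  case True
  have "\<Union>(insert {u, x1} (insert {x2, v} (M - {{u, v}}))) = \<Union>M \<union> {x1, x2}"
    using True by auto
  then show thesis
    using that matching_subdivide_edge_in[OF assms True] by blast
qed

lemma independent_subdivide_edge:
  assumes "independent (subdivide_edge E u v x1 x2) S" "\<not> {u, v} \<subseteq> S"
  shows "independent E S"
  unfolding independent_def
proof (intro ballI)
  fix a b assume ab: "a \<in> S" "b \<in> S"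
  then have "{a, b} \<noteq> {u, v}" using assms(2) by force
  moreover have "{a, b} \<notin> subdivide_edge E u v x1 x2" using assms(1) ab unfolding independent_def by blast
  ultimately show "{a, b} \<notin> E" unfolding subdivide_edge_def by blast
qed

lemma independent_subdivide_edge_contract:
  assumes ind: "independent (subdivide_edge E u v x1 x2) S'" and fin: "finite S'"
  obtains S where "S \<subseteq> S' - {x1, x2}" "independent E S" "card S' \<le> card S + 1"
proof (cases "{u, v} \<subseteq> S'")
  case True
  then have "x1 \<notin> S'" "x2 \<notin> S'"
    using ind unfolding independent_def subdivide_edge_def by auto
  moreover have "independent E (S' - {u})"
    using independent_subdivide_edge[OF independent_mono[OF ind]] by blast
  moreover have "Suc (card (S' - {u})) = card S'"
    using True by (intro card_Suc_Diff1[OF fin]) simp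
  ultimately show thesis by (intro that[of "S' - {u}"]) auto
next
  case False
  have "independent E (S' - {x1, x2})"
    using independent_mono[OF independent_subdivide_edge[OF ind False]] by blast
  moreover have "card S' \<le> card (S' - {x1, x2}) + 1"
  proof -
    have "x1 \<notin> S' \<or> x2 \<notin> S'"
      using ind unfolding independent_def subdivide_edge_def by auto
    then obtain x where "S' \<subseteq> insert x (S' - {x1, x2})" by auto
    then have "card S' \<le> card (insert x (S' - {x1, x2}))" using fin by (simp add: card_mono)
    also have "\<dots> \<le> card (S' - {x1, x2}) + 1" by (simp add: card_insert_le_m1)
    finally show ?thesis .
  qed
  ultimately show thesis using that by blast
qed

theorem mainTheorem3:
  fixes V :: "'a set" and E :: "'a set set" and u v x1 x2 :: 'a
  assumes "graph V E"
    and "\<not> matching_condition V E"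
    and "{u, v} \<in> E"
    and "x1 \<notin> V" and "x2 \<notin> V" and "x1 \<noteq> x2"
  shows "\<not> matching_condition (V \<union> {x1, x2})
            ((E - {{u, v}}) \<union> {{u, x1}, {x1, x2}, {x2, v}})"
  unfolding subdivide_edge_def[symmetric]
proof
  assume mc': "matching_condition (V \<union> {x1, x2}) (subdivide_edge E u v x1 x2)"
  obtain M where M: "matching E M"
    and no_indep: "\<And>S. S \<subseteq> \<Union>M \<Longrightarrow> independent E S \<Longrightarrow> card S \<noteq> card M"
    using assms(2) unfolding matching_condition_def by blast
  obtain M' where M': "matching (subdivide_edge E u v x1 x2) M'"
    and Union_M': "\<Union>M' = \<Union>M \<union> {x1, x2}" and card_M': "card M' = card M + 1"
    using matching_subdivide_edge[OF assms(1) M assms(4-6)] .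
  obtain S' where S': "S' \<subseteq> \<Union>M'" "independent (subdivide_edge E u v x1 x2) S'" "card S' = card M'"
    using mc' M' unfolding matching_condition_def by blast
  have "finite (\<Union>M)"
    using graph_finite_Union[OF assms(1)] M unfolding matching_def by simp
  then have "finite S'" using S'(1) Union_M' finite_subset by auto
  then obtain S where S: "S \<subseteq> S' - {x1, x2}" "independent E S" "card S' \<le> card S + 1"
    using independent_subdivide_edge_contract[OF S'(2)] by blast
  have "card M \<le> card S" using S(3) S'(3) card_M' by simp
  then obtain T where "T \<subseteq> S" "independent E T" "card T = card M"
    using independent_subset_card[OF S(2)] by blast
  moreover have "T \<subseteq> \<Union>M" using \<open>T \<subseteq> S\<close> S(1) S'(1) Union_M' by blast
  ultimately show False using no_indep by blast
qed

end
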